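(* Consider the multi-good panel bundle model described in the context, under the maintained restrictions there (at most two goods purchased per period; $\Gamma_{j_1j_2}\le 0$ for every bundle $j_1j_2\ne AB$) and the stationarity assumption. Then for any $(x_s,x_t)$ and any $s\ne t\le T$: (i) for each good $j\in\mathcal L$: if $P_s(\{j\}\mid x_s,x_t)>P_t(\{j\}\mid x_s,x_t)$, then $\Delta_{s,t}\delta_j>0$ or there is $k\in\mathcal L$, $k\ne j$, with $\Delta_{s,t}\delta_k<0$; (ii) for each bundle $j_1j_2$ with $j_1\ne j_2\in\mathcal L$: if $P_s(\{j_1j_2\}\mid x_s,x_t)>P_t(\{j_1j_2\}\mid x_s,x_t)$, then there is $j\in\{j_1,j_2\}$ with $\Delta_{s,t}\delta_j>0$, or there is $k\in\mathcal L\setminus\{j_1,j_2\}$ with $\Delta_{s,t}\delta_k<0$; (iii) for $\ell\in\{A,B\}$ with $\ell_{-1}$ the other of $A,B$: if $P_s(D_\ell\mid x_s,x_t)>P_t(D_\ell\mid x_s,x_t)$ where $D_\ell=\{\ell,AB\}$, then at least one of the following holds: $\Delta_{s,t}\delta_\ell>0$; $\Delta_{s,t}(\delta_\ell+\operatorname{sign}(\Gamma_{AB})\delta_{\ell_{-1}})>0$; there is $k\in\mathcal L\setminus\{A,B\}$ with $\Delta_{s,t}(\delta_{\ell_{-1}}-\delta_k)>0$; there is $k\in\mathcal L\setminus\{A,B\}$ with $\Delta_{s,t}\delta_k<0$.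
   Context: Multi-good panel bundle model: consumers $i$, periods $t=1,\dots,T$, $T\ge2$ fixed; a finite set of goods $\mathcal L=\{A,B,\dots,J\}$. Consumers purchase at most two goods per period, so the choice set is $\mathcal C=\{O\}\cup\{j:j\in\mathcal L\}\cup\{j_1j_2:j_1\ne j_2\in\mathcal L\}$ ($j$ = only good $j$, $j_1j_2$ = the bundle of $j_1,j_2$, $O$ = outside option). Utilities: $u_{ijt}=X_{ijt}'\beta_0+\alpha_{ij}+\epsilon_{ijt}$ for $j\in\mathcal L$, with $X_{ijt}$ observed, $\alpha_{ij}$ unobserved time-invariant fixed effects, $\epsilon_{ijt}$ unobserved shocks; $u_{ij_1j_2t}=u_{ij_1t}+u_{ij_2t}+\Gamma_{j_1j_2}$ where $\Gamma_{j_1j_2}=\Gamma_{j_1j_2}(Z_i)$ depends only on an observed time-invariant covariate $Z_i$ (suppressed, so $\Gamma_{j_1j_2}$ is treated as a constant); $u_{iOt}=0$. $\Gamma_{AB}$ may have any sign; $\Gamma_{j_1j_2}\le0$ for all $j_1j_2\ne AB$. $Y_{it}\in\mathcal C$ is the utility-maximizing choice; ties have probability zero. Stationarity: for all $s,t\le T$, the distribution of $\epsilon_{is}=(\epsilon_{ijs})_{j\in\mathcal L}$ conditional on $(X_{is},X_{it},Z_i,\alpha_i)$ equals that of $\epsilon_{it}$ conditional on the same. Also some component of $X_{it}$ not in $Z_i$ has a nonzero coefficient. Notation: $P_t(K\mid x_s,x_t)=\Pr(Y_{it}\in K\mid X_{is}=x_s,X_{it}=x_t)$ (with $Z_i$ suppressed);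 $\delta_{jt}=x_{jt}'\beta_0$ for $j\in\mathcal L$; $\Delta_{s,t}\delta_j=\delta_{js}-\delta_{jt}$; $\operatorname{sign}(x)=\mathbb 1\{x>0\}-\mathbb 1\{x<0\}$. *)

theory Defs
  imports "HOL-Analysis.Analysis" "HOL-Probability.Probability"
begin

text \<open>Choice alternatives are represented as sets of goods of cardinality at most two:
  the empty set is the outside option O, a singleton {j} is "only good j", and a
  two-element set {j1, j2} is the bundle j1j2.\<close>

definition choices :: "'g set set" where
  "choices = {S. finite S \<and> card S \<le> 2}"

definition alt_util :: "('g set \<Rightarrow> real) \<Rightarrow> ('g \<Rightarrow> real) \<Rightarrow> 'g set \<Rightarrow> real" where
  "alt_util Gam u S = (\<Sum>j\<in>S. u j) + (if card S = 2 then Gam S else 0)"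

text \<open>The utility-maximizing choice (well defined when there are no ties).\<close>
definition choice :: "('g set \<Rightarrow> real) \<Rightarrow> ('g \<Rightarrow> real) \<Rightarrow> 'g set" where
  "choice Gam u = (SOME S. S \<in> choices \<and> (\<forall>S'\<in>choices. alt_util Gam u S' \<le> alt_util Gam u S))"

definition no_ties :: "('g set \<Rightarrow> real) \<Rightarrow> ('g \<Rightarrow> real) \<Rightarrow> bool" where
  "no_ties Gam u = (\<forall>S\<in>choices. \<forall>S'\<in>choices. S \<noteq> S' \<longrightarrow> alt_util Gam u S \<noteq> alt_util Gam u S')"

end

theory Submission
  imports Defs
begin

(* Fix the fixed effects and the shock: the choice in a period is then a deterministic
   function of the index. If the index change from period s to t favours the alternatives in K
   in a suitable sense, an optimum in K stays in K. For a single good or a bundle: its goods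
   gain and all other goods lose. For D_l = {l, AB}: l gains, the goods outside {A, B} lose both
   absolutely and relative to the partner m of l, and the sign of Gam_AB decides how l and m are
   compared -- as complements (their joint change is nonnegative) or as substitutes (m gains no
   more than l). By stationarity the fixed effects and the shock have the same joint law in both
   periods, so P_s(K) <= P_t(K); each part of the theorem is the contrapositive of such an
   inequality. *)

lemma alt_util_empty [simp]: "alt_util Gam u {} = 0"
  by (simp add: alt_util_def)

lemma alt_util_singleton [simp]: "alt_util Gam u {j} = u j"
  by (simp add: alt_util_def)

lemma alt_util_doubleton [simp]: "j \<noteq> k \<Longrightarrow> alt_util Gam u {j, k} = u j + u k + Gam {j, k}"
  by (simp add: alt_util_def)

lemma alt_util_shift:
  "finite S \<Longrightarrow> alt_util Gam v S = alt_util Gam u S + (\<Sum>j\<in>S. v j - u j)"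
  by (simp add: alt_util_def sum_subtractf)

lemma choices_cases [consumes 1, case_names empty singleton doubleton]:
  assumes "S \<in> choices"
  obtains "S = {}" | j where "S = {j}" | j k where "j \<noteq> k" "S = {j, k}"
proof -
  from assms have "finite S" "card S \<le> 2" by (auto simp: choices_def)
  then consider "card S = 0" | "card S = 1" | "card S = 2" by linarith
  then show ?thesis
    by cases (use \<open>finite S\<close> that in \<open>auto simp: card_1_singleton_iff card_2_iff\<close>)
qed

lemma empty_in_choices [simp]: "{} \<in> choices"
  and singleton_in_choices [simp]: "{j} \<in> choices"
  and doubleton_in_choices [simp]: "{j, k} \<in> choices"
  by (auto simp: choices_def card_insert_if)

lemma choice_in_choices: "choice Gam (u :: 'g::finite \<Rightarrow> real) \<in> choices"
  and choice_optimal: "S \<in> choices \<Longrightarrow> alt_util Gam u S \<le> alt_util Gam u (choice Gam u)"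
proof -
  let ?U = "alt_util Gam u ` choices"
  have "finite ?U" by simp
  moreover have "?U \<noteq> {}" using empty_in_choices by blast
  ultimately obtain T where "T \<in> choices" "alt_util Gam u T = Max ?U"
    using Max_in by (metis imageE)
  with \<open>finite ?U\<close> have "\<exists>T. T \<in> choices \<and> (\<forall>S\<in>choices. alt_util Gam u S \<le> alt_util Gam u T)"
    by auto
  then have "choice Gam u \<in> choices \<and> (\<forall>S\<in>choices. alt_util Gam u S \<le> alt_util Gam u (choice Gam u))"
    unfolding choice_def by (rule someI_ex)
  then show "choice Gam u \<in> choices" "S \<in> choices \<Longrightarrow> alt_util Gam u S \<le> alt_util Gam u (choice Gam u)"
    by auto
qed

(* For K \<subseteq> choices: K contains an optimal alternative. Unlike choice Gam u \<in> K, this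
   does not depend on how ties are broken. *)
definition dominates :: "('g set \<Rightarrow> real) \<Rightarrow> ('g \<Rightarrow> real) \<Rightarrow> 'g set set \<Rightarrow> bool" where
  "dominates Gam u K \<longleftrightarrow> (\<forall>S\<in>choices. \<exists>T\<in>K. alt_util Gam u S \<le> alt_util Gam u T)"

lemma dominates_if_choice_in:
  "choice Gam (u :: 'g::finite \<Rightarrow> real) \<in> K \<Longrightarrow> dominates Gam u K"
  using choice_optimal unfolding dominates_def by blast

lemma choice_in_if_dominates:
  fixes u :: "'g::finite \<Rightarrow> real"
  assumes "K \<subseteq> choices" "no_ties Gam u" "dominates Gam u K"
  shows "choice Gam u \<in> K"
proof -
  obtain T where T: "T \<in> K" "alt_util Gam u (choice Gam u) \<le> alt_util Gam u T"
    using assms(3) choice_in_choices unfolding dominates_def by blast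
  with assms(1) choice_optimal have "alt_util Gam u (choice Gam u) = alt_util Gam u T"
    by (meson antisym subsetD)
  with assms(1,2) T(1) choice_in_choices have "choice Gam u = T"
    unfolding no_ties_def by blast
  with T(1) show ?thesis by simp
qed

lemma dominates_singleton_mono:
  fixes v v' :: "'g \<Rightarrow> real"
  assumes "dominates Gam v {T}" "finite T"
    and "\<And>j. j \<in> T \<Longrightarrow> v j \<le> v' j" "\<And>j. j \<notin> T \<Longrightarrow> v' j \<le> v j"
  shows "dominates Gam v' {T}"
  unfolding dominates_def
proof (intro ballI bexI)
  fix S :: "'g set" assume "S \<in> choices"
  then have "finite S" by (simp add: choices_def)
  let ?d = "\<lambda>j. v' j - v j"
  have "sum ?d S = sum ?d (S \<inter> T) + sum ?d (S - T)"
    using \<open>finite S\<close> by (rule sum.Int_Diff)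
  also have "\<dots> \<le> sum ?d T + 0"
    using assms(2-4) by (intro add_mono sum_mono2 sum_nonpos) auto
  moreover have "alt_util Gam v S \<le> alt_util Gam v T"
    using assms(1) \<open>S \<in> choices\<close> unfolding dominates_def by blast
  ultimately show "alt_util Gam v' S \<le> alt_util Gam v' T"
    using alt_util_shift[OF \<open>finite S\<close>, of Gam v' v] alt_util_shift[OF \<open>finite T\<close>, of Gam v' v]
    by linarith
qed simp

lemma dominates_single_or_bundle_mono:
  fixes v v' :: "'g \<Rightarrow> real"
  assumes "l \<noteq> m"
    and Gam_nonpos: "\<And>S. card S = 2 \<Longrightarrow> S \<noteq> {l, m} \<Longrightarrow> Gam S \<le> 0"
    and dom: "dominates Gam v {{l}, {l, m}}"
    and gain_l: "v l \<le> v' l"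
    and gain_sgn: "v l + sgn (Gam {l, m}) * v m \<le> v' l + sgn (Gam {l, m}) * v' m"
    and loss: "\<And>k. k \<notin> {l, m} \<Longrightarrow> v' k \<le> v k"
    and loss_rel_m: "\<And>k. k \<notin> {l, m} \<Longrightarrow> v' k - v k \<le> v' m - v m"
  shows "dominates Gam v' {{l}, {l, m}}"
proof -
  let ?G = "Gam {l, m}"
  define best where "best u = max (u l) (u l + u m + ?G)" for u :: "'g \<Rightarrow> real"
  have dominates_iff: "dominates Gam u {{l}, {l, m}} \<longleftrightarrow> (\<forall>S\<in>choices. alt_util Gam u S \<le> best u)" for u
    using \<open>l \<noteq> m\<close> by (simp add: dominates_def best_def le_max_iff_disj)
  have bound: "alt_util Gam v S \<le> best v" if "S \<in> choices" for S
    using dom that dominates_iff by blast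
  have sign_cases: "0 < ?G \<or> ?G = 0 \<or> ?G < 0" by linarith
  have complements: "0 < ?G \<Longrightarrow> v l + v m \<le> v' l + v' m"
    and substitutes: "?G < 0 \<Longrightarrow> v' m - v m \<le> v' l - v l"
    using gain_sgn by simp_all
  have empty: "0 \<le> best v'"
    using bound[of "{}"] bound[of "{m}"] gain_l complements substitutes sign_cases
    by (auto simp: best_def max_def split: if_splits)
  have single: "v' k \<le> best v'" for k
  proof -
    consider "k = l" | "k = m" | "k \<notin> {l, m}" by blast
    then show ?thesis
    proof cases
      case 2
      then show ?thesis
        using bound[of "{}"] bound[of "{m}"] gain_l complements substitutes sign_cases
        by (auto simp: best_def max_def split: if_splits)
    next
      case 3
      then show ?thesis
        using bound[of "{k}"] gain_l complements loss[OF 3] loss_rel_m[OF 3]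
        by (auto simp: best_def max_def split: if_splits)
    qed (simp add: best_def)
  qed
  have pair: "v' j + v' k + Gam {j, k} \<le> best v'" if "j \<noteq> k" "k \<notin> {l, m}" for j k
  proof -
    have "Gam {j, k} \<le> 0"
      using Gam_nonpos[of "{j, k}"] that by (auto simp: card_insert_if)
    consider "j = l" | "j = m" | "j \<notin> {l, m}" by blast
    then show ?thesis
    proof cases
      case 1
      then show ?thesis
        using bound[of "{j, k}"] that gain_l complements loss[OF that(2)] loss_rel_m[OF that(2)]
        by (auto simp: best_def max_def split: if_splits)
    next
      case 2
      then show ?thesis
        using bound[of "{j, k}"] bound[of "{k}"] bound[of "{}"] \<open>Gam {j, k} \<le> 0\<close> that
          gain_l complements substitutes loss[OF that(2)] loss_rel_m[OF that(2)] sign_cases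
        by (auto simp: best_def max_def split: if_splits)
    next
      case 3
      then show ?thesis
        using bound[of "{j, k}"] that gain_l complements
          loss[OF that(2)] loss_rel_m[OF that(2)] loss[OF 3] loss_rel_m[OF 3]
        by (auto simp: best_def max_def split: if_splits)
    qed
  qed
  show ?thesis
    unfolding dominates_iff
  proof
    fix S :: "'g set" assume "S \<in> choices"
    then show "alt_util Gam v' S \<le> best v'"
    proof (cases rule: choices_cases)
      case (doubleton j k)
      then consider "{j, k} = {l, m}" | "k \<notin> {l, m}" | "j \<notin> {l, m}" by blast
      then show ?thesis
        by cases
          (use doubleton \<open>l \<noteq> m\<close> pair[of j k] pair[of k j] in \<open>auto simp: best_def insert_commute\<close>)
    qed (use empty single in simp_all)
  qed
qed

lemma borel_measurable_alt_util:
  "(\<lambda>u :: 'g::finite \<Rightarrow> real. alt_util Gam u S) \<in> borel_measurable borel"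
  unfolding alt_util_def by measurable

lemma measurable_choice:
  "choice Gam \<in> (borel :: ('g::finite \<Rightarrow> real) measure) \<rightarrow>\<^sub>M count_space UNIV"
proof -
  define optima where
    "optima u = {S \<in> choices. \<forall>S'\<in>choices. alt_util Gam u S' \<le> alt_util Gam u S}"
    for u :: "'g \<Rightarrow> real"
  (* choice factors through the finite-valued map optima, whose fibres are described by
     finitely many utility comparisons. *)
  have "optima \<in> borel \<rightarrow>\<^sub>M count_space UNIV"
    unfolding measurable_count_space_eq2_countable
  proof (intro conjI ballI)
    fix Q :: "'g set set"
    have [measurable]: "Measurable.pred borel (\<lambda>u. alt_util Gam u S' \<le> alt_util Gam u S)" for S S'
      using borel_measurable_le[OF borel_measurable_alt_util borel_measurable_alt_util]
      by (simp add: pred_def)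
    have "Measurable.pred borel (\<lambda>u. \<forall>S\<in>UNIV. (S \<in> optima u) = (S \<in> Q))"
      unfolding optima_def mem_Collect_eq by (measurable; simp)
    then show "optima -` {Q} \<inter> space borel \<in> sets borel"
      by (simp add: pred_def set_eq_iff vimage_def)
  qed simp
  moreover have "choice Gam = (\<lambda>Q. SOME S. S \<in> Q) \<circ> optima"
    by (simp add: fun_eq_iff choice_def optima_def)
  ultimately show ?thesis by simp
qed

lemma measure_le_if_distr_eq:
  assumes "finite_measure M" "X \<in> M \<rightarrow>\<^sub>M N" "Y \<in> M \<rightarrow>\<^sub>M N"
    and "distr M N X = distr M N Y"
    and "E \<in> sets N" "F \<in> sets N"
    and "AE w in M. Y w \<in> E \<longrightarrow> Y w \<in> F"
  shows "measure M (X -` E \<inter> space M) \<le> measure M (Y -` F \<inter> space M)"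
proof -
  have "measure M (X -` E \<inter> space M) = measure M (Y -` E \<inter> space M)"
    using assms(2-5) by (metis measure_distr)
  also have "\<dots> \<le> measure M (Y -` F \<inter> space M)"
    using assms(1,3,6,7) by (intro finite_measure.finite_measure_mono_AE) (auto elim: AE_mp)
  finally show ?thesis .
qed

lemma measure_choice_le:
  fixes M :: "'w measure" and Gam :: "'g::finite set \<Rightarrow> real"
    and alpha es et :: "'w \<Rightarrow> 'g \<Rightarrow> real" and cs ct :: "'g \<Rightarrow> real"
  assumes "finite_measure M"
    and rv_s: "(\<lambda>w. (alpha w, es w)) \<in> M \<rightarrow>\<^sub>M borel"
    and rv_t: "(\<lambda>w. (alpha w, et w)) \<in> M \<rightarrow>\<^sub>M borel"
    and stationary: "distr M borel (\<lambda>w. (alpha w, es w)) = distr M borel (\<lambda>w. (alpha w, et w))"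
    and ties: "AE w in M. no_ties Gam (\<lambda>j. ct j + alpha w j + et w j)"
    and "K \<subseteq> choices"
    and preserved: "\<And>a e. dominates Gam (\<lambda>j. cs j + a j + e j) K
                            \<Longrightarrow> dominates Gam (\<lambda>j. ct j + a j + e j) K"
  shows "measure M {w \<in> space M. choice Gam (\<lambda>j. cs j + alpha w j + es w j) \<in> K}
       \<le> measure M {w \<in> space M. choice Gam (\<lambda>j. ct j + alpha w j + et w j) \<in> K}"
proof -
  define E where
    "E c = {p :: ('g \<Rightarrow> real) \<times> ('g \<Rightarrow> real). choice Gam (\<lambda>j. c j + fst p j + snd p j) \<in> K}"
    for c :: "'g \<Rightarrow> real"
  have E_sets: "E c \<in> sets borel" for c
  proof -
    have "(\<lambda>p :: ('g \<Rightarrow> real) \<times> ('g \<Rightarrow> real). \<lambda>j. c j + fst p j + snd p j) \<in> borel_measurable borel"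
      by (intro borel_measurable_continuous_onI continuous_intros
          continuous_on_compose2[OF continuous_on_product_coordinates]) auto
    from measurable_comp[OF this measurable_choice] show ?thesis
      unfolding E_def by (simp add: vimage_def measurable_sets_borel o_def)
  qed
  have "AE w in M. (alpha w, et w) \<in> E cs \<longrightarrow> (alpha w, et w) \<in> E ct"
    using ties
  proof eventually_elim
    case (elim w)
    show ?case
      using choice_in_if_dominates[OF \<open>K \<subseteq> choices\<close> elim preserved[OF dominates_if_choice_in]]
      by (simp add: E_def)
  qed
  then have "measure M ((\<lambda>w. (alpha w, es w)) -` E cs \<inter> space M)
      \<le> measure M ((\<lambda>w. (alpha w, et w)) -` E ct \<inter> space M)"
    by (intro measure_le_if_distr_eq[OF \<open>finite_measure M\<close> rv_s rv_t stationary E_sets E_sets])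
  then show ?thesis
    by (simp add: E_def vimage_def Int_def conj_commute)
qed

theorem proposition5:
  fixes M :: "'w measure"
    and A B :: "'g :: finite"
    and Gam :: "'g set \<Rightarrow> real"
    and beta0 :: "real ^ 'k"
    and xs xt :: "'g \<Rightarrow> real ^ 'k"
    and alpha es et :: "'w \<Rightarrow> 'g \<Rightarrow> real"
  assumes prob: "prob_space M"
    and AB: "A \<noteq> B"
    and Gam_nonpos: "\<And>S. card S = 2 \<Longrightarrow> S \<noteq> {A, B} \<Longrightarrow> Gam S \<le> 0"
    and rv_s: "(\<lambda>w. (alpha w, es w)) \<in> M \<rightarrow>\<^sub>M borel"
    and rv_t: "(\<lambda>w. (alpha w, et w)) \<in> M \<rightarrow>\<^sub>M borel"
    and stationary: "distr M borel (\<lambda>w. (alpha w, es w)) = distr M borel (\<lambda>w. (alpha w, et w))"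
    and ties: "AE w in M. no_ties Gam (\<lambda>j. xs j \<bullet> beta0 + alpha w j + es w j)
                        \<and> no_ties Gam (\<lambda>j. xt j \<bullet> beta0 + alpha w j + et w j)"
  defines "\<delta>s \<equiv> \<lambda>j. xs j \<bullet> beta0"
    and "\<delta>t \<equiv> \<lambda>j. xt j \<bullet> beta0"
    and "Ps \<equiv> \<lambda>K. measure M {w \<in> space M. choice Gam (\<lambda>j. xs j \<bullet> beta0 + alpha w j + es w j) \<in> K}"
    and "Pt \<equiv> \<lambda>K. measure M {w \<in> space M. choice Gam (\<lambda>j. xt j \<bullet> beta0 + alpha w j + et w j) \<in> K}"
  shows "(\<forall>j. Ps {{j}} > Pt {{j}} \<longrightarrow>
             \<delta>s j - \<delta>t j > 0 \<or> (\<exists>k. k \<noteq> j \<and> \<delta>s k - \<delta>t k < 0))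
       \<and> (\<forall>j1 j2. j1 \<noteq> j2 \<longrightarrow> Ps {{j1, j2}} > Pt {{j1, j2}} \<longrightarrow>
             (\<exists>j\<in>{j1, j2}. \<delta>s j - \<delta>t j > 0) \<or> (\<exists>k. k \<notin> {j1, j2} \<and> \<delta>s k - \<delta>t k < 0))
       \<and> (\<forall>l m. (l = A \<and> m = B \<or> l = B \<and> m = A) \<longrightarrow> Ps {{l}, {A, B}} > Pt {{l}, {A, B}} \<longrightarrow>
             \<delta>s l - \<delta>t l > 0
           \<or> (\<delta>s l + sgn (Gam {A, B}) * \<delta>s m) - (\<delta>t l + sgn (Gam {A, B}) * \<delta>t m) > 0
           \<or> (\<exists>k. k \<notin> {A, B} \<and> (\<delta>s m - \<delta>s k) - (\<delta>t m - \<delta>t k) > 0)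
           \<or> (\<exists>k. k \<notin> {A, B} \<and> \<delta>s k - \<delta>t k < 0))"
proof -
  have ties_t: "AE w in M. no_ties Gam (\<lambda>j. \<delta>t j + alpha w j + et w j)"
    using ties by eventually_elim (simp add: \<delta>t_def)
  have Ps_le_Pt: "Ps K \<le> Pt K"
    if "K \<subseteq> choices"
      and "\<And>a e. dominates Gam (\<lambda>j. \<delta>s j + a j + e j) K
                  \<Longrightarrow> dominates Gam (\<lambda>j. \<delta>t j + a j + e j) K"
    for K
    using measure_choice_le[OF prob_space.finite_measure[OF prob] rv_s rv_t stationary ties_t that]
    unfolding Ps_def Pt_def \<delta>s_def \<delta>t_def by simp
  have Ps_le_Pt_singleton: "Ps {T} \<le> Pt {T}"
    if T: "T \<in> choices" and gain: "\<forall>j\<in>T. \<delta>s j \<le> \<delta>t j"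
      and loss: "\<forall>j. j \<notin> T \<longrightarrow> \<delta>t j \<le> \<delta>s j" for T
  proof (rule Ps_le_Pt)
    show "dominates Gam (\<lambda>j. \<delta>t j + a j + e j) {T}"
      if "dominates Gam (\<lambda>j. \<delta>s j + a j + e j) {T}" for a e
      using that by (rule dominates_singleton_mono) (use T gain loss in \<open>auto simp: choices_def\<close>)
  qed (use T in simp)
  have Ps_le_Pt_single_or_AB: "Ps {{l}, {l, m}} \<le> Pt {{l}, {l, m}}"
    if "l \<noteq> m" "{l, m} = {A, B}" and changes: "\<delta>s l \<le> \<delta>t l"
      "\<delta>s l + sgn (Gam {l, m}) * \<delta>s m \<le> \<delta>t l + sgn (Gam {l, m}) * \<delta>t m"
      "\<forall>k. k \<notin> {l, m} \<longrightarrow> \<delta>t k \<le> \<delta>s k \<and> \<delta>t k - \<delta>s k \<le> \<delta>t m - \<delta>s m" for l m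
  proof (rule Ps_le_Pt)
    show "dominates Gam (\<lambda>j. \<delta>t j + a j + e j) {{l}, {l, m}}"
      if "dominates Gam (\<lambda>j. \<delta>s j + a j + e j) {{l}, {l, m}}" for a e
      using \<open>l \<noteq> m\<close> _ that
    proof (rule dominates_single_or_bundle_mono)
      show "Gam S \<le> 0" if "card S = 2" "S \<noteq> {l, m}" for S
        using Gam_nonpos that \<open>{l, m} = {A, B}\<close> by simp
    qed (use changes in \<open>simp_all add: algebra_simps\<close>)
  qed simp
  show ?thesis
  proof (intro conjI allI impI)
    show "\<delta>s j - \<delta>t j > 0 \<or> (\<exists>k. k \<noteq> j \<and> \<delta>s k - \<delta>t k < 0)" if "Ps {{j}} > Pt {{j}}" for j
      using that Ps_le_Pt_singleton[of "{j}"] by (force simp: not_less)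
  next
    show "(\<exists>j\<in>{j1, j2}. \<delta>s j - \<delta>t j > 0) \<or> (\<exists>k. k \<notin> {j1, j2} \<and> \<delta>s k - \<delta>t k < 0)"
      if "Ps {{j1, j2}} > Pt {{j1, j2}}" for j1 j2
      using that Ps_le_Pt_singleton[of "{j1, j2}"] by (force simp: not_less)
  next
    fix l m assume "l = A \<and> m = B \<or> l = B \<and> m = A" "Ps {{l}, {A, B}} > Pt {{l}, {A, B}}"
    with AB Ps_le_Pt_single_or_AB[of l m] show "\<delta>s l - \<delta>t l > 0
      \<or> (\<delta>s l + sgn (Gam {A, B}) * \<delta>s m) - (\<delta>t l + sgn (Gam {A, B}) * \<delta>t m) > 0
      \<or> (\<exists>k. k \<notin> {A, B} \<and> (\<delta>s m - \<delta>s k) - (\<delta>t m - \<delta>t k) > 0)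
      \<or> (\<exists>k. k \<notin> {A, B} \<and> \<delta>s k - \<delta>t k < 0)"
      by (force simp: not_less insert_commute)
  qed
qed

end
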